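(* (a) If $x,y\in I$, then $xy\in I$ and $yx\in I$. (b) If $x,y\in\beta\mathbb{N}$ with $x\in I$ and $y\notin I$, then $xy\in I$ and $yx\in I$.
   Context: $\mathbb{N}=\{1,2,3,\dots\}$; $\beta\mathbb{N}$ is the set of ultrafilters on $\mathbb{N}$ (Stone–Čech compactification, naturals identified with principal ultrafilters), with multiplication: $A\in xy$ iff $\{n\in\mathbb{N}:A/n\in y\}\in x$, where $A/n=\{m:mn\in A\}$. For $A\subseteq\mathbb{N}$, $\overline{A}=\{x\in\beta\mathbb{N}:A\in x\}$. $P$ is the set of primes, $L_0=\{1\}$, $L_n=\{a_1\cdots a_n:a_i\in P\}$. $I=\bigcap_{i=0}^\infty\overline{\mathbb{N}\setminus L_i}$ (ultrafilters containing none of the $L_i$). *)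

theory Defs
  imports "HOL-Computational_Algebra.Primes"
begin

definition Npos :: "nat set" where "Npos = {1..}"

definition is_ultrafilter :: "nat set set \<Rightarrow> bool" where
  "is_ultrafilter U \<longleftrightarrow>
     U \<subseteq> Pow Npos \<and> Npos \<in> U \<and> {} \<notin> U \<and>
     (\<forall>A B. A \<in> U \<and> B \<in> U \<longrightarrow> A \<inter> B \<in> U) \<and>
     (\<forall>A B. A \<in> U \<and> A \<subseteq> B \<and> B \<subseteq> Npos \<longrightarrow> B \<in> U) \<and>
     (\<forall>A. A \<subseteq> Npos \<longrightarrow> A \<in> U \<or> Npos - A \<in> U)"

definition betaN :: "nat set set set" where
  "betaN = {U. is_ultrafilter U}"

definition divset :: "nat set \<Rightarrow> nat \<Rightarrow> nat set" where
  "divset A n = {m \<in> Npos. m * n \<in> A}"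

definition umult :: "nat set set \<Rightarrow> nat set set \<Rightarrow> nat set set" where
  "umult x y = {A. A \<subseteq> Npos \<and> {n \<in> Npos. divset A n \<in> y} \<in> x}"

text \<open>L_n: products of exactly n primes (with repetition); L_0 = {1}.\<close>
definition Lset :: "nat \<Rightarrow> nat set" where
  "Lset k = {m. \<exists>ps. length ps = k \<and> (\<forall>p\<in>set ps. prime p) \<and> m = prod_list ps}"

definition ucl :: "nat set \<Rightarrow> nat set set set" where
  "ucl A = {x \<in> betaN. A \<in> x}"

definition Iset :: "nat set set set" where
  "Iset = (\<Inter>i. ucl (Npos - Lset i))"

end

theory Submission
  imports Defs
begin

text \<open>Let \<open>\<Omega>(n)\<close> be the number of prime factors of \<open>n\<close> counted with multiplicity, so that
  \<open>L\<^sub>k = {n. \<Omega>(n) = k}\<close>. Since \<open>\<Omega>\<close> is additive, \<open>m n \<in> L\<^sub>k\<close> forces \<open>\<Omega>(n) \<le> k\<close> and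
  \<open>m \<in> L\<^bsub>k - \<Omega>(n)\<^esub>\<close>. Hence if \<open>L\<^sub>k \<in> x y\<close>, then \<open>x\<close> contains \<open>{n. \<Omega>(n) \<le> k}\<close>, a finite union
  of the sets \<open>L\<^sub>i\<close>; and if \<open>L\<^sub>k \<in> y x\<close>, then \<open>x\<close> contains some \<open>L\<^sub>k/n \<subseteq> L\<^bsub>k - \<Omega>(n)\<^esub>\<close>.
  Either way \<open>x \<notin> I\<close>.\<close>

definition bigomega :: "nat \<Rightarrow> nat" where
  "bigomega n = size (prime_factorization n)"

lemma bigomega_mult: "m > 0 \<Longrightarrow> n > 0 \<Longrightarrow> bigomega (m * n) = bigomega m + bigomega n"
  by (simp add: bigomega_def prime_factorization_mult)

lemma Lset_eq: "Lset k = {n. n > 0 \<and> bigomega n = k}"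
proof (intro set_eqI iffI)
  fix n assume "n \<in> Lset k"
  then obtain ps where ps: "length ps = k" "\<forall>p\<in>set ps. prime p" "n = prod_list ps"
    unfolding Lset_def by blast
  have "prime_factorization (prod_mset (mset ps)) = mset ps"
    using ps(2) by (intro prime_factorization_prod_mset_primes) auto
  moreover have "n > 0"
    using ps(2,3) by (metis neq0_conv not_prime_0 prod_list_zero_iff)
  ultimately show "n \<in> {n. n > 0 \<and> bigomega n = k}"
    using ps by (simp add: bigomega_def prod_mset_prod_list)
next
  fix n assume "n \<in> {n. n > 0 \<and> bigomega n = k}"
  hence n: "n > 0" "bigomega n = k" by auto
  obtain ps where ps: "mset ps = prime_factorization n" using ex_mset by blast
  have "length ps = k" using n ps by (metis bigomega_def size_mset)
  moreover have "\<forall>p\<in>set ps. prime p"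
    using ps by (metis in_prime_factors_imp_prime set_mset_mset)
  moreover have "n = prod_list ps"
    using ps n by (metis prod_mset_prime_factorization_nat prod_mset_prod_list)
  ultimately show "n \<in> Lset k" unfolding Lset_def by blast
qed

lemma Lset_subset_Npos: "Lset k \<subseteq> Npos"
  by (auto simp: Lset_eq Npos_def)

lemma divset_Lset:
  assumes "n \<in> Npos"
  shows "divset (Lset k) n = (if bigomega n \<le> k then Lset (k - bigomega n) else {})"
  using assms by (auto simp: divset_def Lset_eq Npos_def bigomega_mult)

lemma is_ultrafilter_Npos: "is_ultrafilter U \<Longrightarrow> Npos \<in> U"
  unfolding is_ultrafilter_def by (elim conjE)

lemma is_ultrafilter_empty: "is_ultrafilter U \<Longrightarrow> {} \<notin> U"
  unfolding is_ultrafilter_def by (elim conjE)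

lemma is_ultrafilter_mono: "is_ultrafilter U \<Longrightarrow> A \<in> U \<Longrightarrow> A \<subseteq> B \<Longrightarrow> B \<subseteq> Npos \<Longrightarrow> B \<in> U"
  unfolding is_ultrafilter_def by blast

lemma is_ultrafilter_Int_iff:
  assumes U: "is_ultrafilter U" and "A \<subseteq> Npos" "B \<subseteq> Npos"
  shows "A \<inter> B \<in> U \<longleftrightarrow> A \<in> U \<and> B \<in> U"
  using is_ultrafilter_mono[OF U, of "A \<inter> B"] assms
  by (auto simp: is_ultrafilter_def)

lemma is_ultrafilter_Diff_iff:
  assumes U: "is_ultrafilter U" and "A \<subseteq> Npos"
  shows "Npos - A \<in> U \<longleftrightarrow> A \<notin> U"
proof
  assume "Npos - A \<in> U"
  then show "A \<notin> U"
    using is_ultrafilter_Int_iff[OF U, of A "Npos - A"] is_ultrafilter_empty[OF U] assms by auto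
next
  show "A \<notin> U \<Longrightarrow> Npos - A \<in> U" using U assms unfolding is_ultrafilter_def by blast
qed

lemma is_ultrafilterI:
  assumes sub: "U \<subseteq> Pow Npos" and "Npos \<in> U"
    and Int: "\<And>A B. A \<subseteq> Npos \<Longrightarrow> B \<subseteq> Npos \<Longrightarrow> A \<inter> B \<in> U \<longleftrightarrow> A \<in> U \<and> B \<in> U"
    and Diff: "\<And>A. A \<subseteq> Npos \<Longrightarrow> Npos - A \<in> U \<longleftrightarrow> A \<notin> U"
  shows "is_ultrafilter U"
  unfolding is_ultrafilter_def
proof (intro conjI allI impI)
  show "{} \<notin> U" using Diff[of Npos] \<open>Npos \<in> U\<close> by simp
  show "A \<inter> B \<in> U" if "A \<in> U \<and> B \<in> U" for A B
    using that sub Int[of A B] by blast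
  show "B \<in> U" if "A \<in> U \<and> A \<subseteq> B \<and> B \<subseteq> Npos" for A B
    using that sub Int[of A B] by (auto simp: Int_absorb2)
  show "A \<in> U \<or> Npos - A \<in> U" if "A \<subseteq> Npos" for A
    using that Diff by blast
qed (use assms in auto)

lemma is_ultrafilter_Un:
  assumes U: "is_ultrafilter U" and A: "A \<subseteq> Npos" and B: "B \<subseteq> Npos" and "A \<union> B \<in> U"
  shows "A \<in> U \<or> B \<in> U"
proof -
  have "Npos - (A \<union> B) = (Npos - A) \<inter> (Npos - B)" by blast
  moreover have "Npos - (A \<union> B) \<notin> U"
    using assms is_ultrafilter_Diff_iff[OF U, of "A \<union> B"] by simp
  ultimately show ?thesis
    using is_ultrafilter_Int_iff[OF U, of "Npos - A" "Npos - B"]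
      is_ultrafilter_Diff_iff[OF U A] is_ultrafilter_Diff_iff[OF U B] by auto
qed

lemma is_ultrafilter_UN:
  assumes U: "is_ultrafilter U" and "finite I" and "\<And>i. i \<in> I \<Longrightarrow> A i \<subseteq> Npos"
    and "(\<Union>i\<in>I. A i) \<in> U"
  shows "\<exists>i\<in>I. A i \<in> U"
  using assms(2-)
proof (induction I rule: finite_induct)
  case empty
  then show ?case using is_ultrafilter_empty[OF U] by simp
next
  case (insert j I)
  then have "A j \<in> U \<or> (\<Union>i\<in>I. A i) \<in> U"
    by (intro is_ultrafilter_Un[OF U]) auto
  then show ?case using insert by blast
qed

lemma umult_is_ultrafilter:
  assumes x: "is_ultrafilter x" and y: "is_ultrafilter y"
  shows "is_ultrafilter (umult x y)"
proof -
  define f where "f A = {n \<in> Npos. divset A n \<in> y}" for A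
  have divset_sub: "divset A n \<subseteq> Npos" for A n by (auto simp: divset_def)
  have f_sub: "f A \<subseteq> Npos" for A by (auto simp: f_def)
  have mem: "A \<in> umult x y \<longleftrightarrow> A \<subseteq> Npos \<and> f A \<in> x" for A
    by (simp add: umult_def f_def)
  have "n \<in> Npos \<Longrightarrow> divset Npos n = Npos" for n
    by (auto simp: divset_def Npos_def)
  then have "f Npos = Npos"
    using is_ultrafilter_Npos[OF y] by (auto simp: f_def)
  moreover have "f (A \<inter> B) = f A \<inter> f B" for A B
  proof -
    have "divset (A \<inter> B) n = divset A n \<inter> divset B n" for n by (auto simp: divset_def)
    then show ?thesis by (auto simp: f_def is_ultrafilter_Int_iff[OF y divset_sub divset_sub])
  qed
  moreover have "f (Npos - A) = Npos - f A" for A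
  proof -
    have "n \<in> Npos \<Longrightarrow> divset (Npos - A) n = Npos - divset A n" for n
      by (auto simp: divset_def Npos_def)
    then show ?thesis by (auto simp: f_def is_ultrafilter_Diff_iff[OF y divset_sub])
  qed
  ultimately show ?thesis
    using is_ultrafilter_Npos[OF x] is_ultrafilter_Int_iff[OF x f_sub f_sub]
      is_ultrafilter_Diff_iff[OF x f_sub]
    by (intro is_ultrafilterI) (auto simp: mem)
qed

lemma Iset_iff: "x \<in> Iset \<longleftrightarrow> is_ultrafilter x \<and> (\<forall>k. Lset k \<notin> x)"
  using is_ultrafilter_Diff_iff[OF _ Lset_subset_Npos]
  by (auto simp: Iset_def ucl_def betaN_def)

lemma Iset_bigomega_bounded_notin:
  assumes "x \<in> Iset"
  shows "{n \<in> Npos. bigomega n \<le> k} \<notin> x"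
proof
  assume "{n \<in> Npos. bigomega n \<le> k} \<in> x"
  moreover have "{n \<in> Npos. bigomega n \<le> k} = (\<Union>i\<le>k. Lset i)"
    by (auto simp: Lset_eq Npos_def)
  ultimately show False
    using assms is_ultrafilter_UN[of x "{..k}" Lset] Lset_subset_Npos
    by (auto simp: Iset_iff)
qed

lemma umult_Iset_left:
  assumes x: "x \<in> Iset" and y: "is_ultrafilter y"
  shows "umult x y \<in> Iset"
proof -
  have xu: "is_ultrafilter x" using x by (simp add: Iset_iff)
  have "Lset k \<notin> umult x y" for k
  proof
    assume "Lset k \<in> umult x y"
    then have "{n \<in> Npos. divset (Lset k) n \<in> y} \<in> x" by (simp add: umult_def)
    moreover have "{n \<in> Npos. divset (Lset k) n \<in> y} \<subseteq> {n \<in> Npos. bigomega n \<le> k}"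
      using is_ultrafilter_empty[OF y] by (auto simp: divset_Lset split: if_splits)
    ultimately have "{n \<in> Npos. bigomega n \<le> k} \<in> x"
      by (rule is_ultrafilter_mono[OF xu]) auto
    then show False using Iset_bigomega_bounded_notin[OF x] by blast
  qed
  then show ?thesis using umult_is_ultrafilter[OF xu y] by (simp add: Iset_iff)
qed

lemma umult_Iset_right:
  assumes x: "x \<in> Iset" and y: "is_ultrafilter y"
  shows "umult y x \<in> Iset"
proof -
  have xu: "is_ultrafilter x" using x by (simp add: Iset_iff)
  have "divset (Lset k) n \<notin> x" if "n \<in> Npos" for k n
    using that x is_ultrafilter_empty[OF xu] by (simp add: divset_Lset Iset_iff)
  then have "{n \<in> Npos. divset (Lset k) n \<in> x} = {}" for k by blast
  then have "Lset k \<notin> umult y x" for k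
    using is_ultrafilter_empty[OF y] unfolding umult_def by (metis (no_types) mem_Collect_eq)
  then show ?thesis using umult_is_ultrafilter[OF y xu] by (simp add: Iset_iff)
qed

theorem theorem3p7:
  shows "(\<forall>x y. x \<in> Iset \<and> y \<in> Iset \<longrightarrow> umult x y \<in> Iset \<and> umult y x \<in> Iset)
     \<and> (\<forall>x y. x \<in> betaN \<and> y \<in> betaN \<and> x \<in> Iset \<and> y \<notin> Iset
             \<longrightarrow> umult x y \<in> Iset \<and> umult y x \<in> Iset)"
proof -
  have "y \<in> Iset \<Longrightarrow> is_ultrafilter y" for y by (simp add: Iset_iff)
  then show ?thesis using umult_Iset_left umult_Iset_right by (simp add: betaN_def)
qed

end
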